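(* Let $H$ be $d^4/dx^4$ in $L_2(\mathbb{R}_+)$ with boundary conditions $u''(0)=\alpha u(0)+\alpha_1u'(0)$, $u'''(0)=-\alpha_2u(0)-\bar\alpha u'(0)$ ($\alpha\in\mathbb{C}$, $\alpha_1,\alpha_2\in\mathbb{R}$). A point $\lambda=k^4$, $k>0$, is an eigenvalue of $H$ if and only if $\alpha=\bar\alpha$, $\alpha_1=(\alpha-k^2)k^{-1}$ and $\alpha_2=(\alpha+k^2)k$. In this case $\Omega'(k)=-2k(\alpha-ik^2)\neq0$, so $k$ is a simple zero of $\Omega$.
   Context: $\alpha_0=\alpha_1\alpha_2-|\alpha|^2$, $\Omega(\zeta)=\alpha_0+(1-i)\alpha_2\zeta+2i\operatorname{Re}\alpha\,\zeta^2-(1+i)\alpha_1\zeta^3-\zeta^4$. $H$ acts as $u\mapsto u^{(4)}$ on $u\in\mathsf{H}^4(\mathbb{R}_+)$ satisfying the boundary conditions; it is self-adjoint. *)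

theory Defs
  imports "HOL-Analysis.Analysis"
begin

text \<open>Elements of H^4(R_+), represented by a function u together with its
classical one-sided derivatives D 1, ..., D 4 on [0, infinity) (D 0 = u),
all of which are square integrable on [0, infinity).\<close>

definition H4_halfline :: "(nat \<Rightarrow> real \<Rightarrow> complex) \<Rightarrow> bool" where
  "H4_halfline D \<longleftrightarrow>
     (\<forall>j<4. \<forall>t\<ge>0. (D j has_vector_derivative D (Suc j) t) (at t within {0..}))
     \<and> continuous_on {0..} (D 4)
     \<and> (\<forall>j\<le>4. (\<lambda>t. (cmod (D j t))\<^sup>2) integrable_on {0..})"

definition bc_H :: "complex \<Rightarrow> real \<Rightarrow> real \<Rightarrow> (nat \<Rightarrow> real \<Rightarrow> complex) \<Rightarrow> bool" where
  "bc_H \<alpha> \<alpha>1 \<alpha>2 D \<longleftrightarrow>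
     D 2 0 = \<alpha> * D 0 0 + of_real \<alpha>1 * D 1 0 \<and>
     D 3 0 = - of_real \<alpha>2 * D 0 0 - cnj \<alpha> * D 1 0"

definition is_eigenvalue_H :: "complex \<Rightarrow> real \<Rightarrow> real \<Rightarrow> complex \<Rightarrow> bool" where
  "is_eigenvalue_H \<alpha> \<alpha>1 \<alpha>2 lam \<longleftrightarrow>
     (\<exists>D. H4_halfline D \<and> bc_H \<alpha> \<alpha>1 \<alpha>2 D \<and> (\<exists>t\<ge>0. D 0 t \<noteq> 0)
          \<and> (\<forall>t\<ge>0. D 4 t = lam * D 0 t))"

definition alpha0 :: "complex \<Rightarrow> real \<Rightarrow> real \<Rightarrow> real" where
  "alpha0 \<alpha> \<alpha>1 \<alpha>2 = \<alpha>1 * \<alpha>2 - (cmod \<alpha>)\<^sup>2"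

definition Omega :: "complex \<Rightarrow> real \<Rightarrow> real \<Rightarrow> complex \<Rightarrow> complex" where
  "Omega \<alpha> \<alpha>1 \<alpha>2 \<zeta> = of_real (alpha0 \<alpha> \<alpha>1 \<alpha>2) + (1 - \<i>) * of_real \<alpha>2 * \<zeta>
     + 2 * \<i> * of_real (Re \<alpha>) * \<zeta>\<^sup>2 - (1 + \<i>) * of_real \<alpha>1 * \<zeta>^3 - \<zeta>^4"

end

theory Submission
  imports Defs
begin

(* Let u = D 0 be an eigenfunction for the eigenvalue k^4 and let r be a fourth root of k^4
   with Re r \<ge> 0, i.e. r \<in> {k, ik, -ik}.  Since d^4 - r^4 = (d - r)(d^3 + r d^2 + r^2 d + r^3),
   the combination G_r = u''' + r u'' + r^2 u' + r^3 u (root_combination D r) solves G_r' = r G_r,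
   so |G_r| is nondecreasing, and square integrability of u, ..., u''' forces G_r = 0.  These
   three linear relations give u' = -k u, u'' = k^2 u, u''' = -k^3 u, hence u = u(0) e^{-kt} with
   u(0) \<noteq> 0, and the boundary conditions turn into the stated conditions on the parameters.
   Conversely, under these conditions e^{-kt} is an eigenfunction. *)

lemma exp_solution_of_linear_ode:
  fixes g :: "real \<Rightarrow> complex" and c :: complex
  assumes deriv: "\<And>t. t \<ge> 0 \<Longrightarrow> (g has_vector_derivative c * g t) (at t within {0..})"
    and "t \<ge> 0"
  shows "g t = g 0 * exp (c * of_real t)"
proof -
  define h where "h t = g t * exp (- (c * of_real t))" for t
  have exp_deriv: "((\<lambda>t. exp (- (c * of_real t))) has_vector_derivative
                     - c * exp (- (c * of_real t))) (at t within {0..})" for t :: real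
    by (rule has_vector_derivative_real_field) (auto intro!: derivative_eq_intros)
  have "(h has_vector_derivative 0) (at t within {0..})" if "t \<ge> 0" for t
    using has_vector_derivative_mult[OF deriv[OF that] exp_deriv]
    unfolding h_def by (simp add: algebra_simps)
  then obtain C where "\<And>x. x \<ge> 0 \<Longrightarrow> h x = C"
    using has_derivative_zero_constant[of "{0..}" h] by (auto simp: has_vector_derivative_def)
  then have "h t = h 0"
    using \<open>t \<ge> 0\<close> by (metis order_refl)
  then show ?thesis
    by (simp add: h_def exp_minus field_simps)
qed

lemma not_integrable_on_halfline_if_bounded_below:
  fixes F :: "real \<Rightarrow> real"
  assumes "e > 0" and bound: "\<And>t. t \<ge> 0 \<Longrightarrow> F t \<ge> e"
  shows "\<not> F integrable_on {0..}"
proof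
  assume int: "F integrable_on {0..}"
  obtain n :: nat where n: "real n * e > integral {0..} F"
    using reals_Archimedean3[OF \<open>e > 0\<close>] by blast
  have int_n: "F integrable_on {0..real n}"
    by (rule integrable_on_subinterval[OF int]) auto
  have "real n * e = integral {0..real n} (\<lambda>_. e)"
    by simp
  also have "\<dots> \<le> integral {0..real n} F"
    by (rule integral_le) (use int_n bound in auto)
  also have "\<dots> \<le> integral {0..} F"
    by (rule integral_subset_le)
      (use int int_n bound \<open>e > 0\<close> in \<open>auto intro: order_trans[of 0 e] less_imp_le\<close>)
  finally show False
    using n by simp
qed

definition root_combination :: "(nat \<Rightarrow> real \<Rightarrow> complex) \<Rightarrow> complex \<Rightarrow> real \<Rightarrow> complex" where
  "root_combination D r t = (\<Sum>j<4. r ^ (3 - j) * D j t)"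

lemma root_combination_eq:
  "root_combination D r t = D 3 t + r * D 2 t + r\<^sup>2 * D 1 t + r ^ 3 * D 0 t"
  by (simp add: root_combination_def eval_nat_numeral)

lemma root_combination_has_vector_derivative:
  assumes "H4_halfline D" and eigen: "D 4 t = r ^ 4 * D 0 t" and "t \<ge> 0"
  shows "(root_combination D r has_vector_derivative r * root_combination D r t) (at t within {0..})"
proof -
  have "(D j has_vector_derivative D (Suc j) t) (at t within {0..})" if "j < 4" for j
    using assms that unfolding H4_halfline_def by blast
  from this[of 0] this[of 1] this[of 2] this[of 3]
  have "(root_combination D r has_vector_derivative
          D 4 t + r * D 3 t + r\<^sup>2 * D 2 t + r ^ 3 * D 1 t) (at t within {0..})"
    unfolding root_combination_eq[abs_def]
    by (intro has_vector_derivative_add has_vector_derivative_mult_right)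
       (simp_all add: eval_nat_numeral)
  then show ?thesis
    using eigen by (simp add: root_combination_eq algebra_simps eval_nat_numeral)
qed

lemma norm_root_combination_le:
  "(cmod (root_combination D r t))\<^sup>2 \<le> (\<Sum>j<4. (cmod r ^ (3 - j))\<^sup>2) * (\<Sum>j<4. (cmod (D j t))\<^sup>2)"
proof -
  have "cmod (root_combination D r t) \<le> (\<Sum>j<4. cmod r ^ (3 - j) * cmod (D j t))"
    unfolding root_combination_def
    by (rule order_trans[OF norm_sum]) (simp add: norm_mult norm_power)
  then have "(cmod (root_combination D r t))\<^sup>2 \<le> (\<Sum>j<4. cmod r ^ (3 - j) * cmod (D j t))\<^sup>2"
    by (rule power_mono) simp
  also have "\<dots> \<le> (\<Sum>j<4. (cmod r ^ (3 - j))\<^sup>2) * (\<Sum>j<4. (cmod (D j t))\<^sup>2)"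
    by (rule Cauchy_Schwarz_ineq_sum)
  finally show ?thesis .
qed

lemma root_combination_eq_0:
  assumes H: "H4_halfline D" and eigen: "\<forall>t\<ge>0. D 4 t = lam * D 0 t"
    and "r ^ 4 = lam" and "Re r \<ge> 0" and "t \<ge> 0"
  shows "root_combination D r t = 0"
proof -
  have G_exp: "root_combination D r s = root_combination D r 0 * exp (r * of_real s)" if "s \<ge> 0" for s
    using exp_solution_of_linear_ode root_combination_has_vector_derivative[OF H] eigen assms(3) that
    by blast
  define M where "M = (\<Sum>j<4. (cmod r ^ (3 - j))\<^sup>2)"
  define F where "F s = (\<Sum>j<4. (cmod (D j s))\<^sup>2)" for s
  have "M > 0"
    unfolding M_def by (simp add: eval_nat_numeral add_nonneg_pos)
  have "F integrable_on {0..}"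
    using H unfolding F_def[abs_def] H4_halfline_def by (intro integrable_sum) auto
  moreover have "F s \<ge> (cmod (root_combination D r 0))\<^sup>2 / M" if "s \<ge> 0" for s
  proof -
    have "cmod (exp (r * of_real s)) \<ge> 1"
      using \<open>Re r \<ge> 0\<close> that by (simp add: norm_exp_eq_Re)
    then have "cmod (root_combination D r 0) \<le> cmod (root_combination D r s)"
      using G_exp[OF that] by (simp add: norm_mult mult_le_cancel_left1)
    then have "(cmod (root_combination D r 0))\<^sup>2 \<le> M * F s"
      using norm_root_combination_le[of D r s] unfolding M_def F_def
      by (meson norm_ge_zero order_trans power_mono)
    then show ?thesis
      using \<open>M > 0\<close> by (simp add: field_simps)
  qed
  ultimately have "root_combination D r 0 = 0"
    using not_integrable_on_halfline_if_bounded_below[of "(cmod (root_combination D r 0))\<^sup>2 / M" F]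
      \<open>M > 0\<close> by (auto simp: less_le)
  then show ?thesis
    using G_exp[OF \<open>t \<ge> 0\<close>] by simp
qed

lemma cubic_coeffs_from_roots:
  fixes a0 a1 a2 a3 c :: complex
  assumes "c \<noteq> 0"
    and root: "a3 + c * a2 + c\<^sup>2 * a1 + c ^ 3 * a0 = 0"
    and root_i: "a3 + (\<i> * c) * a2 + (\<i> * c)\<^sup>2 * a1 + (\<i> * c) ^ 3 * a0 = 0"
    and root_minus_i: "a3 + (- \<i> * c) * a2 + (- \<i> * c)\<^sup>2 * a1 + (- \<i> * c) ^ 3 * a0 = 0"
  shows "a1 = - c * a0 \<and> a2 = c\<^sup>2 * a0 \<and> a3 = - (c ^ 3 * a0)"
proof -
  have "2 * (a3 - c\<^sup>2 * a1) = 0"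
    using arg_cong2[OF root_i root_minus_i, of "(+)"]
    by (simp add: algebra_simps power2_eq_square power3_eq_cube)
  then have a3: "a3 = c\<^sup>2 * a1"
    by simp
  have "2 * \<i> * c * (a2 - c\<^sup>2 * a0) = 0"
    using arg_cong2[OF root_i root_minus_i, of "(-)"]
    by (simp add: algebra_simps power2_eq_square power3_eq_cube)
  then have a2: "a2 = c\<^sup>2 * a0"
    using \<open>c \<noteq> 0\<close> by simp
  have "2 * c\<^sup>2 * (a1 + c * a0) = 0"
    using root unfolding a2 a3 by (simp add: algebra_simps power2_eq_square power3_eq_cube)
  then have "a1 = - c * a0"
    using \<open>c \<noteq> 0\<close> by (simp add: add_eq_0_iff2)
  with a2 a3 show ?thesis
    by (simp add: power2_eq_square power3_eq_cube)
qed

lemma eigenfunction_derivatives: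
  assumes "k > 0" and H: "H4_halfline D" and eigen: "\<forall>t\<ge>0. D 4 t = of_real (k ^ 4) * D 0 t"
    and "t \<ge> 0"
  shows "D 1 t = - of_real k * D 0 t \<and> D 2 t = (of_real k)\<^sup>2 * D 0 t \<and> D 3 t = - ((of_real k) ^ 3 * D 0 t)"
proof -
  have "root_combination D r t = 0" if "r ^ 4 = of_real (k ^ 4)" "Re r \<ge> 0" for r
    using root_combination_eq_0[OF H eigen that \<open>t \<ge> 0\<close>] .
  from this[of "of_real k"] this[of "\<i> * of_real k"] this[of "- \<i> * of_real k"] \<open>k > 0\<close>
  show ?thesis
    by (intro cubic_coeffs_from_roots) (auto simp: root_combination_eq power_mult_distrib)
qed

lemma eigenfunction_eq_exp:
  assumes "k > 0" and H: "H4_halfline D" and eigen: "\<forall>t\<ge>0. D 4 t = of_real (k ^ 4) * D 0 t"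
    and "t \<ge> 0"
  shows "D 0 t = D 0 0 * exp (- of_real k * of_real t)"
proof (rule exp_solution_of_linear_ode[OF _ \<open>t \<ge> 0\<close>])
  fix s :: real
  assume "s \<ge> 0"
  then have "(D 0 has_vector_derivative D 1 s) (at s within {0..})"
    using H unfolding H4_halfline_def by auto
  then show "(D 0 has_vector_derivative - of_real k * D 0 s) (at s within {0..})"
    using eigenfunction_derivatives[OF \<open>k > 0\<close> H eigen \<open>s \<ge> 0\<close>] by simp
qed

lemma eigenvalue_imp_parameters:
  assumes "k > 0" and "is_eigenvalue_H \<alpha> \<alpha>1 \<alpha>2 (of_real (k ^ 4))"
  shows "\<alpha> = cnj \<alpha> \<and> \<alpha>1 = (Re \<alpha> - k\<^sup>2) / k \<and> \<alpha>2 = (Re \<alpha> + k\<^sup>2) * k"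
proof -
  obtain D where H: "H4_halfline D" and bc: "bc_H \<alpha> \<alpha>1 \<alpha>2 D"
    and nonzero: "\<exists>t\<ge>0. D 0 t \<noteq> 0" and eigen: "\<forall>t\<ge>0. D 4 t = of_real (k ^ 4) * D 0 t"
    using assms(2) unfolding is_eigenvalue_H_def by blast
  have "D 0 0 \<noteq> 0"
    using nonzero eigenfunction_eq_exp[OF \<open>k > 0\<close> H eigen] by fastforce
  obtain d1: "D 1 0 = - of_real k * D 0 0" and d2: "D 2 0 = (of_real k)\<^sup>2 * D 0 0"
    and d3: "D 3 0 = - ((of_real k) ^ 3 * D 0 0)"
    using eigenfunction_derivatives[OF \<open>k > 0\<close> H eigen order_refl] by blast
  have "(\<alpha> - of_real \<alpha>1 * of_real k) * D 0 0 = (of_real k)\<^sup>2 * D 0 0"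
    using bc d1 d2 unfolding bc_H_def by (simp add: algebra_simps)
  moreover have "(- of_real \<alpha>2 + cnj \<alpha> * of_real k) * D 0 0 = - ((of_real k) ^ 3) * D 0 0"
    using bc d1 d3 unfolding bc_H_def by (simp add: algebra_simps)
  ultimately have "(of_real k)\<^sup>2 = \<alpha> - of_real \<alpha>1 * of_real k"
    and "- ((of_real k) ^ 3) = - of_real \<alpha>2 + cnj \<alpha> * of_real k"
    using \<open>D 0 0 \<noteq> 0\<close> by (simp, metis mult_cancel_right)
  then have real: "\<alpha> = of_real (k\<^sup>2 + \<alpha>1 * k)"
    and "of_real \<alpha>2 = cnj \<alpha> * of_real k + of_real (k ^ 3)"
    by (simp_all add: algebra_simps)
  then have "\<alpha>2 = k ^ 3 + k * (k\<^sup>2 + \<alpha>1 * k)"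
    by (simp add: algebra_simps flip: of_real_mult of_real_add of_real_power)
  with real \<open>k > 0\<close> show ?thesis
    by (simp add: field_simps power2_eq_square power3_eq_cube)
qed

lemma parameters_imp_eigenvalue:
  assumes "k > 0"
  shows "is_eigenvalue_H (of_real a) ((a - k\<^sup>2) / k) ((a + k\<^sup>2) * k) (of_real (k ^ 4))"
proof -
  define D :: "nat \<Rightarrow> real \<Rightarrow> complex" where "D j t = of_real ((- k) ^ j * exp (- k * t))" for j t
  have "(D j has_vector_derivative D (Suc j) t) (at t within {0..})" for j t
    unfolding D_def[abs_def]
    by (rule has_vector_derivative_of_real) (auto intro!: derivative_eq_intros)
  moreover have "(\<lambda>t. (cmod (D j t))\<^sup>2) integrable_on {0..}" for j
  proof -
    have "(cmod (D j t))\<^sup>2 = (k ^ j * exp (- k * t))\<^sup>2" for t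
      using \<open>k > 0\<close> by (simp add: D_def norm_mult norm_power)
    also have "\<dots> t = k ^ (2 * j) * exp (- (2 * k) * t)" for t
      by (simp add: power_mult_distrib power_mult power2_eq_square mult.commute flip: exp_add)
    finally have "(cmod (D j t))\<^sup>2 = k ^ (2 * j) * exp (- (2 * k) * t)" for t .
    then show ?thesis
      using integrable_on_exp_minus_to_infinity[of "2 * k"] \<open>k > 0\<close>
      by (simp add: integrable_on_cmult_iff)
  qed
  moreover have "continuous_on {0..} (D 4)"
    unfolding D_def[abs_def] by (intro continuous_intros)
  ultimately have "H4_halfline D"
    unfolding H4_halfline_def by blast
  moreover have "bc_H (of_real a) ((a - k\<^sup>2) / k) ((a + k\<^sup>2) * k) D"
    unfolding bc_H_def D_def using \<open>k > 0\<close>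
    by (simp add: field_simps power2_eq_square power3_eq_cube
             flip: of_real_mult of_real_add of_real_diff of_real_minus)
  moreover have "D 0 0 \<noteq> 0" and "\<forall>t\<ge>0. D 4 t = of_real (k ^ 4) * D 0 t"
    by (simp_all add: D_def)
  ultimately show ?thesis
    unfolding is_eigenvalue_H_def by blast
qed

lemma Omega_has_field_derivative:
  "(Omega \<alpha> \<alpha>1 \<alpha>2 has_field_derivative (1 - \<i>) * of_real \<alpha>2 + 4 * \<i> * of_real (Re \<alpha>) * z
      - 3 * (1 + \<i>) * of_real \<alpha>1 * z\<^sup>2 - 4 * z ^ 3) (at z)"
  unfolding Omega_def[abs_def]
  by (auto intro!: derivative_eq_intros simp: algebra_simps power2_eq_square power3_eq_cube)

lemma Omega_at_eigenvalue_root: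
  fixes a k :: real
  assumes "k > 0"
  defines "\<Omega> \<equiv> Omega (of_real a) ((a - k\<^sup>2) / k) ((a + k\<^sup>2) * k)"
  shows "\<Omega> (of_real k) = 0" and "deriv \<Omega> (of_real k) = - 2 * of_real k * (of_real a - \<i> * of_real (k\<^sup>2))"
proof -
  show "\<Omega> (of_real k) = 0"
    unfolding \<Omega>_def Omega_def alpha0_def using \<open>k > 0\<close>
    by (simp add: complex_eq_iff field_simps power2_eq_square power3_eq_cube power4_eq_xxxx)
  show "deriv \<Omega> (of_real k) = - 2 * of_real k * (of_real a - \<i> * of_real (k\<^sup>2))"
    unfolding \<Omega>_def DERIV_imp_deriv[OF Omega_has_field_derivative] using \<open>k > 0\<close>
    by (simp add: complex_eq_iff field_simps power2_eq_square power3_eq_cube)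
qed

theorem proposition5p7:
  fixes \<alpha> :: complex and \<alpha>1 \<alpha>2 k :: real
  assumes "k > 0"
  shows "(is_eigenvalue_H \<alpha> \<alpha>1 \<alpha>2 (of_real (k ^ 4)) \<longleftrightarrow>
           (\<alpha> = cnj \<alpha> \<and> \<alpha>1 = (Re \<alpha> - k\<^sup>2) / k \<and> \<alpha>2 = (Re \<alpha> + k\<^sup>2) * k))
       \<and> (is_eigenvalue_H \<alpha> \<alpha>1 \<alpha>2 (of_real (k ^ 4)) \<longrightarrow>
           Omega \<alpha> \<alpha>1 \<alpha>2 (of_real k) = 0 \<and>
           deriv (Omega \<alpha> \<alpha>1 \<alpha>2) (of_real k) = - 2 * of_real k * (\<alpha> - \<i> * of_real (k\<^sup>2)) \<and>
           deriv (Omega \<alpha> \<alpha>1 \<alpha>2) (of_real k) \<noteq> 0)"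
proof -
  have real_form: "\<alpha> = of_real (Re \<alpha>) \<and> \<alpha>1 = (Re \<alpha> - k\<^sup>2) / k \<and> \<alpha>2 = (Re \<alpha> + k\<^sup>2) * k"
    if "\<alpha> = cnj \<alpha> \<and> \<alpha>1 = (Re \<alpha> - k\<^sup>2) / k \<and> \<alpha>2 = (Re \<alpha> + k\<^sup>2) * k"
    using that Reals_cnj_iff[of \<alpha>] by simp
  have "is_eigenvalue_H \<alpha> \<alpha>1 \<alpha>2 (of_real (k ^ 4)) \<longleftrightarrow>
          (\<alpha> = cnj \<alpha> \<and> \<alpha>1 = (Re \<alpha> - k\<^sup>2) / k \<and> \<alpha>2 = (Re \<alpha> + k\<^sup>2) * k)"
    using eigenvalue_imp_parameters[OF assms] parameters_imp_eigenvalue[OF assms, of "Re \<alpha>"] real_form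
    by metis
  moreover have "- 2 * of_real k * (of_real a - \<i> * of_real (k\<^sup>2)) \<noteq> 0" for a
    using assms by (simp add: complex_eq_iff)
  ultimately show ?thesis
    using Omega_at_eigenvalue_root[OF assms, of "Re \<alpha>"] real_form by metis
qed

end
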